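(* The Bass stable rank of the ring $s'(\mathbb{Z}^d)$ (for any $d\ge1$) is $1$.
   Context: For $\mathbf{n}\in\mathbb{Z}^d$, $\|\mathbf{n}\|_1$ denotes the $1$-norm. $s'(\mathbb{Z}^d)$ is the set of all maps $\mathbf{a}:\mathbb{Z}^d\to\mathbb{C}$ for which there exist $M>0$ and $k\in\mathbb{N}$ with $|\mathbf{a}(\mathbf{n})|\le M(1+\|\mathbf{n}\|_1)^k$ for all $\mathbf{n}\in\mathbb{Z}^d$; it is a commutative unital ring under pointwise operations, with unit the constant function $1$. For a commutative unital ring $R$ with $1\neq 0$: an $N$-tuple $(a_1,\dots,a_N)\in R^N$ is invertible (unimodular) if there is $(b_1,\dots,b_N)\in R^N$ with $b_1a_1+\cdots+b_Na_N=1$; $U_N(R)$ denotes the set of such tuples. An $(N+1)$-tuple $(a_1,\dots,a_N,\alpha)\in U_{N+1}(R)$ is reducible if there exist $h_1,\dots,h_N\in R$ with $(a_1+h_1\alpha,\dots,a_N+h_N\alpha)\in U_N(R)$. The Bass stable rank of $R$ is the smallest integer $N\ge1$ such that every element of $U_{N+1}(R)$ is reducible (and $\infty$ if no such $N$ exists). *)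

theory Defs
  imports "HOL-Analysis.Analysis" "HOL-Library.Extended_Nat"
begin

text \<open>The ring s'(Z^d): points of Z^d are functions 'd \<Rightarrow> int for a finite
  (nonempty) index type 'd, so d = CARD('d) \<ge> 1.  Ring operations are pointwise.\<close>

definition sprime :: "(('d::finite \<Rightarrow> int) \<Rightarrow> complex) set" where
  "sprime = {a. \<exists>M::real>0. \<exists>k::nat. \<forall>n.
      cmod (a n) \<le> M * (1 + real_of_int (\<Sum>i\<in>UNIV. \<bar>n i\<bar>)) ^ k}"

definition unimodular :: "('a \<Rightarrow> complex) set \<Rightarrow> nat \<Rightarrow> ('a \<Rightarrow> complex) list \<Rightarrow> bool" where
  "unimodular S N as \<longleftrightarrow> length as = N \<and> set as \<subseteq> S \<and>
     (\<exists>bs. length bs = N \<and> set bs \<subseteq> S \<and>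
        (\<lambda>n. \<Sum>i<N. (bs ! i) n * (as ! i) n) = (\<lambda>_. 1))"

definition reducible :: "('a \<Rightarrow> complex) set \<Rightarrow> ('a \<Rightarrow> complex) list \<Rightarrow> ('a \<Rightarrow> complex) \<Rightarrow> bool" where
  "reducible S as \<alpha> \<longleftrightarrow>
     (\<exists>hs. length hs = length as \<and> set hs \<subseteq> S \<and>
        unimodular S (length as) (map2 (\<lambda>a h. \<lambda>n. a n + h n * \<alpha> n) as hs))"

definition stable_rank_cond :: "('a \<Rightarrow> complex) set \<Rightarrow> nat \<Rightarrow> bool" where
  "stable_rank_cond S N \<longleftrightarrow>
     (\<forall>as \<alpha>. unimodular S (N + 1) (as @ [\<alpha>]) \<longrightarrow> reducible S as \<alpha>)"

definition bass_stable_rank :: "('a \<Rightarrow> complex) set \<Rightarrow> enat" where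
  "bass_stable_rank S =
     (if \<exists>N\<ge>1. stable_rank_cond S N
      then enat (LEAST N. N \<ge> 1 \<and> stable_rank_cond S N) else \<infinity>)"

end

theory Submission
  imports Defs
begin

text \<open>Let \<open>b a + c \<alpha> = 1\<close> in \<open>s'(\<int>\<^sup>d)\<close> and let \<open>P\<close> be a polynomial weight with
  \<open>|b(n)|, |c(n)| \<le> P(n)\<close>. At each point \<open>n\<close> either \<open>|a(n)| \<ge> 1/(4P(n))\<close>, or \<open>a(n)\<close> is so
  small that the Bezout identity forces \<open>|\<alpha>(n)| > 3/(4P(n))\<close> and hence
  \<open>|a(n) + \<alpha>(n)| \<ge> 1/(2P(n))\<close>. Taking \<open>h\<close> to be the indicator of the second case, which is
  bounded and so lies in \<open>s'(\<int>\<^sup>d)\<close>, the function \<open>a + h\<alpha>\<close> is bounded below by the inverse of a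
  polynomial and is therefore a unit of \<open>s'(\<int>\<^sup>d)\<close>.\<close>

lemma unimodular_pair_iff:
  "unimodular S 2 [a, \<alpha>] \<longleftrightarrow>
     a \<in> S \<and> \<alpha> \<in> S \<and> (\<exists>b\<in>S. \<exists>c\<in>S. \<forall>n. b n * a n + c n * \<alpha> n = 1)"
proof -
  have "(\<exists>bs. length bs = 2 \<and> set bs \<subseteq> S \<and>
          (\<lambda>n. \<Sum>i<2. (bs ! i) n * ([a, \<alpha>] ! i) n) = (\<lambda>_. 1))
        \<longleftrightarrow> (\<exists>b\<in>S. \<exists>c\<in>S. \<forall>n. b n * a n + c n * \<alpha> n = 1)"
  proof
    assume "\<exists>bs. length bs = 2 \<and> set bs \<subseteq> S \<and>
              (\<lambda>n. \<Sum>i<2. (bs ! i) n * ([a, \<alpha>] ! i) n) = (\<lambda>_. 1)"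
    then obtain b c where "b \<in> S" "c \<in> S"
        "(\<lambda>n. \<Sum>i<2. ([b, c] ! i) n * ([a, \<alpha>] ! i) n) = (\<lambda>_. 1)"
      by (auto simp: numeral_2_eq_2 length_Suc_conv)
    then show "\<exists>b\<in>S. \<exists>c\<in>S. \<forall>n. b n * a n + c n * \<alpha> n = 1"
      by (auto simp: numeral_2_eq_2 fun_eq_iff)
  next
    assume "\<exists>b\<in>S. \<exists>c\<in>S. \<forall>n. b n * a n + c n * \<alpha> n = 1"
    then obtain b c where "b \<in> S" "c \<in> S" "\<forall>n. b n * a n + c n * \<alpha> n = 1"
      by blast
    then show "\<exists>bs. length bs = 2 \<and> set bs \<subseteq> S \<and>
                 (\<lambda>n. \<Sum>i<2. (bs ! i) n * ([a, \<alpha>] ! i) n) = (\<lambda>_. 1)"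
      by (intro exI[of _ "[b, c]"]) (auto simp: numeral_2_eq_2)
  qed
  then show ?thesis
    unfolding unimodular_def by auto
qed

lemma unimodular_singleton_iff:
  "unimodular S 1 [f] \<longleftrightarrow> f \<in> S \<and> (\<exists>g\<in>S. \<forall>n. g n * f n = 1)"
proof -
  have "(\<exists>bs. length bs = 1 \<and> set bs \<subseteq> S \<and>
          (\<lambda>n. \<Sum>i<1. (bs ! i) n * ([f] ! i) n) = (\<lambda>_. 1))
        \<longleftrightarrow> (\<exists>g\<in>S. \<forall>n. g n * f n = 1)"
  proof
    assume "\<exists>bs. length bs = 1 \<and> set bs \<subseteq> S \<and>
              (\<lambda>n. \<Sum>i<1. (bs ! i) n * ([f] ! i) n) = (\<lambda>_. 1)"
    then show "\<exists>g\<in>S. \<forall>n. g n * f n = 1"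
      by (auto simp: fun_eq_iff length_Suc_conv)
  next
    assume "\<exists>g\<in>S. \<forall>n. g n * f n = 1"
    then obtain g where "g \<in> S" "\<forall>n. g n * f n = 1"
      by blast
    then show "\<exists>bs. length bs = 1 \<and> set bs \<subseteq> S \<and>
                 (\<lambda>n. \<Sum>i<1. (bs ! i) n * ([f] ! i) n) = (\<lambda>_. 1)"
      by (intro exI[of _ "[g]"]) auto
  qed
  then show ?thesis
    unfolding unimodular_def by auto
qed

lemma stable_rank_cond_1I:
  assumes "\<And>a \<alpha> b c. a \<in> S \<Longrightarrow> \<alpha> \<in> S \<Longrightarrow> b \<in> S \<Longrightarrow> c \<in> S \<Longrightarrow>
             (\<And>n. b n * a n + c n * \<alpha> n = 1) \<Longrightarrow>
             \<exists>h\<in>S. unimodular S 1 [\<lambda>n. a n + h n * \<alpha> n]"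
  shows "stable_rank_cond S 1"
  unfolding stable_rank_cond_def
proof (intro allI impI)
  fix as \<alpha>
  assume unimod: "unimodular S (1 + 1) (as @ [\<alpha>])"
  then obtain a where as: "as = [a]"
    unfolding unimodular_def by (auto simp: length_Suc_conv)
  from unimod have "unimodular S 2 [a, \<alpha>]"
    unfolding as one_add_one by simp
  then obtain b c where "a \<in> S" "\<alpha> \<in> S" "b \<in> S" "c \<in> S"
      "\<And>n. b n * a n + c n * \<alpha> n = 1"
    by (auto simp: unimodular_pair_iff)
  then obtain h where "h \<in> S" "unimodular S 1 [\<lambda>n. a n + h n * \<alpha> n]"
    using assms by meson
  then show "reducible S as \<alpha>"
    unfolding reducible_def as by (intro exI[of _ "[h]"]) auto
qed

lemma bass_stable_rank_eq_1:
  assumes "stable_rank_cond S 1"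
  shows "bass_stable_rank S = 1"
proof -
  have "(LEAST N. N \<ge> 1 \<and> stable_rank_cond S N) = 1"
    using assms by (intro Least_equality) auto
  with assms show ?thesis
    unfolding bass_stable_rank_def by (auto simp: one_enat_def)
qed

definition weight :: "('d::finite \<Rightarrow> int) \<Rightarrow> real" where
  "weight n = 1 + real_of_int (\<Sum>i\<in>UNIV. \<bar>n i\<bar>)"

lemma weight_ge_1: "weight n \<ge> 1"
  unfolding weight_def by (simp add: sum_nonneg)

lemma weight_pos: "weight n > 0"
  using weight_ge_1 by (rule less_le_trans[OF zero_less_one])

lemma weight_power_mono: "k \<le> k' \<Longrightarrow> weight n ^ k \<le> weight n ^ k'"
  by (intro power_increasing weight_ge_1)

lemma sprime_iff:
  "a \<in> sprime \<longleftrightarrow> (\<exists>M>0. \<exists>k. \<forall>n. cmod (a n) \<le> M * weight n ^ k)"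
  unfolding sprime_def weight_def by simp

lemma sprimeI:
  assumes "M > 0" "\<And>n. cmod (a n) \<le> M * weight n ^ k"
  shows "a \<in> sprime"
  using assms by (auto simp: sprime_iff)

lemma sprime_common_bound:
  fixes a b :: "('d::finite \<Rightarrow> int) \<Rightarrow> complex"
  assumes "a \<in> sprime" "b \<in> sprime"
  obtains M k where "M > 0" "\<And>n. cmod (a n) \<le> M * weight n ^ k"
    "\<And>n. cmod (b n) \<le> M * weight n ^ k"
proof -
  obtain Ma ka Mb kb where pos: "Ma > 0" "Mb > 0"
    and a: "\<And>n. cmod (a n) \<le> Ma * weight n ^ ka"
    and b: "\<And>n. cmod (b n) \<le> Mb * weight n ^ kb"
    using assms by (auto simp: sprime_iff)
  have "cmod (a n) \<le> (Ma + Mb) * weight n ^ (ka + kb)"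
       "cmod (b n) \<le> (Ma + Mb) * weight n ^ (ka + kb)" for n
  proof -
    have "Ma * weight n ^ ka \<le> (Ma + Mb) * weight n ^ (ka + kb)"
         "Mb * weight n ^ kb \<le> (Ma + Mb) * weight n ^ (ka + kb)"
      using pos weight_pos[of n] weight_power_mono[of ka "ka + kb" n]
        weight_power_mono[of kb "ka + kb" n]
      by (auto intro!: mult_mono)
    then show "cmod (a n) \<le> (Ma + Mb) * weight n ^ (ka + kb)"
              "cmod (b n) \<le> (Ma + Mb) * weight n ^ (ka + kb)"
      using a[of n] b[of n] by linarith+
  qed
  with pos show thesis
    by (intro that[of "Ma + Mb" "ka + kb"]) auto
qed

lemma sprime_add:
  assumes "a \<in> sprime" "b \<in> sprime"
  shows "(\<lambda>n. a n + b n) \<in> sprime"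
proof -
  obtain M k where "M > 0" and a: "\<And>n. cmod (a n) \<le> M * weight n ^ k"
    and b: "\<And>n. cmod (b n) \<le> M * weight n ^ k"
    using sprime_common_bound[OF assms] by blast
  have "cmod (a n + b n) \<le> (2 * M) * weight n ^ k" for n
    using norm_triangle_ineq[of "a n" "b n"] a[of n] b[of n] by simp
  with \<open>M > 0\<close> show ?thesis
    by (intro sprimeI[of "2 * M"]) auto
qed

lemma sprime_mult:
  assumes "a \<in> sprime" "b \<in> sprime"
  shows "(\<lambda>n. a n * b n) \<in> sprime"
proof -
  obtain M k where "M > 0" and a: "\<And>n. cmod (a n) \<le> M * weight n ^ k"
    and b: "\<And>n. cmod (b n) \<le> M * weight n ^ k"
    using sprime_common_bound[OF assms] by blast
  have "cmod (a n * b n) \<le> (M * M) * weight n ^ (k + k)" for n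
    using mult_mono[OF a[of n] b[of n]] \<open>M > 0\<close> weight_pos[of n]
    by (simp add: norm_mult power_add algebra_simps)
  with \<open>M > 0\<close> show ?thesis
    by (intro sprimeI[of "M * M"]) auto
qed

lemma sprime_bounded:
  assumes "\<And>n. cmod (h n) \<le> B"
  shows "h \<in> sprime"
proof -
  have "cmod (h n) \<le> (\<bar>B\<bar> + 1) * weight n ^ 0" for n
    using assms[of n] abs_ge_self[of B] by simp
  then show ?thesis
    by (intro sprimeI[of "\<bar>B\<bar> + 1" _ 0]) auto
qed

lemma sprime_inverse:
  assumes "M > 0" and lower: "\<And>n. 1 / (M * weight n ^ k) \<le> cmod (f n)"
  shows "(\<lambda>n. inverse (f n)) \<in> sprime"
proof -
  have "cmod (inverse (f n)) \<le> M * weight n ^ k" for n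
  proof -
    have "cmod (inverse (f n)) = inverse (cmod (f n))"
      by (simp add: norm_inverse)
    also have "\<dots> \<le> inverse (1 / (M * weight n ^ k))"
      using lower[of n] \<open>M > 0\<close> weight_pos[of n] by (intro le_imp_inverse_le) auto
    finally show ?thesis
      by simp
  qed
  with \<open>M > 0\<close> show ?thesis
    by (rule sprimeI)
qed

lemma norm_add_lower_bound_if_small:
  fixes a \<alpha> b c :: "'a::real_normed_field"
  assumes "P > 0" "norm b \<le> P" "norm c \<le> P"
    and bezout: "b * a + c * \<alpha> = 1"
    and small: "norm a < 1 / (4 * P)"
  shows "norm (a + \<alpha>) \<ge> 1 / (4 * P)"
proof -
  have "norm (b * a) \<le> P * norm a"
    using assms(2) by (simp add: norm_mult mult_right_mono)
  also have "\<dots> < 1 / 4"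
    using small \<open>P > 0\<close> by (simp add: field_simps)
  finally have "norm (c * \<alpha>) > 3 / 4"
    using bezout norm_triangle_ineq[of "b * a" "c * \<alpha>"] by simp
  moreover have "norm (c * \<alpha>) \<le> P * norm \<alpha>"
    using assms(3) by (simp add: norm_mult mult_right_mono)
  ultimately have "norm \<alpha> > 3 / (4 * P)"
    using \<open>P > 0\<close> by (simp add: field_simps)
  moreover have "norm (a + \<alpha>) \<ge> norm \<alpha> - norm a"
    by (metis add.commute norm_diff_ineq)
  moreover have "3 / (4 * P) - 1 / (4 * P) \<ge> 1 / (4 * P)"
    using \<open>P > 0\<close> by (simp add: field_simps)
  ultimately show ?thesis
    using small by linarith
qed

lemma sprime_reduce_unimodular_pair:
  fixes a \<alpha> b c :: "('d::finite \<Rightarrow> int) \<Rightarrow> complex"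
  assumes "a \<in> sprime" "\<alpha> \<in> sprime" "b \<in> sprime" "c \<in> sprime"
    and bezout: "\<And>n. b n * a n + c n * \<alpha> n = 1"
  shows "\<exists>h\<in>sprime. unimodular sprime 1 [\<lambda>n. a n + h n * \<alpha> n]"
proof -
  obtain M k where "M > 0" and bc: "\<And>n. cmod (b n) \<le> M * weight n ^ k"
    "\<And>n. cmod (c n) \<le> M * weight n ^ k"
    using sprime_common_bound[OF assms(3,4)] by blast
  define P where "P n = M * weight n ^ k" for n :: "'d \<Rightarrow> int"
  have P_pos: "P n > 0" for n
    using \<open>M > 0\<close> weight_pos[of n] by (simp add: P_def)
  define h where "h n = (if cmod (a n) < 1 / (4 * P n) then 1 else (0::complex))" for n
  define f where "f n = a n + h n * \<alpha> n" for n
  have lower: "1 / (4 * P n) \<le> cmod (f n)" for n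
  proof (cases "cmod (a n) < 1 / (4 * P n)")
    case True
    then have "1 / (4 * P n) \<le> cmod (a n + \<alpha> n)"
      by (rule norm_add_lower_bound_if_small[OF P_pos bc[folded P_def] bezout])
    with True show ?thesis
      by (simp add: f_def h_def)
  next
    case False
    then show ?thesis
      by (simp add: f_def h_def)
  qed
  have "h \<in> sprime"
    by (rule sprime_bounded[of _ 1]) (simp add: h_def)
  then have "f \<in> sprime"
    unfolding f_def using assms(1,2) by (intro sprime_add sprime_mult)
  moreover have "(\<lambda>n. inverse (f n)) \<in> sprime"
    using \<open>M > 0\<close> lower by (intro sprime_inverse[of "4 * M"]) (auto simp: P_def mult.assoc)
  moreover have "f n \<noteq> 0" for n
    using lower[of n] P_pos[of n] by auto
  ultimately have "unimodular sprime 1 [f]"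
    unfolding unimodular_singleton_iff by (auto intro!: bexI[of _ "\<lambda>n. inverse (f n)"])
  with \<open>h \<in> sprime\<close> show ?thesis
    unfolding f_def by blast
qed

theorem theorem1p4:
  shows "bass_stable_rank (sprime :: (('d::finite \<Rightarrow> int) \<Rightarrow> complex) set) = 1"
  by (rule bass_stable_rank_eq_1, rule stable_rank_cond_1I, rule sprime_reduce_unimodular_pair)

end
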